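(* Let $\mathcal{H},\mathcal{K}$ be complex Hilbert spaces and $(f_*,f^* ):(\mathsf{P}(\mathcal{H}),\mathsf{L}(\mathcal{H}),\bar e_{\mathcal{H}})\to(\mathsf{P}(\mathcal{K}),\mathsf{L}(\mathcal{K}),\bar e_{\mathcal{K}})$ a Chu morphism. Then $f_*$ is injective if and only if $f^*(f_*([\psi]))=[\psi]$ for every nonzero $\psi\in\mathcal{H}$ (where the ray $f_*([\psi])$ is regarded as an element of $\mathsf{L}(\mathcal{K})$ and $[\psi]$ as an element of $\mathsf{L}(\mathcal{H})$).
   Context: A Chu morphism $(X,A,e)\to(X',A',e')$ between Chu spaces over $[0,1]$ is a pair $(f_*:X\to X',f^*:A'\to A)$ with $e(x,f^*(a'))=e'(f_*(x),a')$ for all $x,a'$. For a complex Hilbert space $\mathcal{H}$: $\mathsf{L}(\mathcal{H})$ is the set of closed subspaces, $P_S$ the orthogonal projector onto $S$, $\mathsf{P}(\mathcal{H})\subseteq\mathsf{L}(\mathcal{H})$ the set of rays $[\psi]=\{\lambda\psi:\lambda\in\mathbb{C}\}$, $\psi\neq0$, and $\bar e_{\mathcal{H}}([\psi],S)=\|P_S\psi\|^2/\|\psi\|^2$. *)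

theory Defs
  imports Complex_Main
begin

text \<open>The inner product is conjugate-linear in the first
and linear in the second argument (physics convention).\<close>

class complex_hilbert = ab_group_add +
  fixes scaleC :: "complex \<Rightarrow> 'a \<Rightarrow> 'a" (infixr "*\<^sub>C" 75)
    and cinner :: "'a \<Rightarrow> 'a \<Rightarrow> complex"
  assumes scaleC_add_right: "a *\<^sub>C (x + y) = a *\<^sub>C x + a *\<^sub>C y"
    and scaleC_add_left: "(a + b) *\<^sub>C x = a *\<^sub>C x + b *\<^sub>C x"
    and scaleC_scaleC: "a *\<^sub>C (b *\<^sub>C x) = (a * b) *\<^sub>C x"
    and scaleC_one: "1 *\<^sub>C x = x"
    and cinner_add_right: "cinner x (y + z) = cinner x y + cinner x z"
    and cinner_scaleC_right: "cinner x (a *\<^sub>C y) = a * cinner x y"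
    and cinner_commute: "cinner y x = cnj (cinner x y)"
    and cinner_self_nonneg: "Im (cinner x x) = 0 \<and> Re (cinner x x) \<ge> 0"
    and cinner_self_eq_0: "cinner x x = 0 \<longleftrightarrow> x = 0"
    and cinner_complete:
      "(\<forall>e::real>0. \<exists>N::nat. \<forall>m\<ge>N. \<forall>n\<ge>N. Re (cinner ((X::nat \<Rightarrow> 'a) m - X n) (X m - X n)) < e) \<Longrightarrow>
       (\<exists>L. \<forall>e::real>0. \<exists>N::nat. \<forall>n\<ge>N. Re (cinner (X n - L) (X n - L)) < e)"

definition cnorm :: "'a::complex_hilbert \<Rightarrow> real" where
  "cnorm x = sqrt (Re (cinner x x))"

definition closed_subspace :: "'a::complex_hilbert set \<Rightarrow> bool" where
  "closed_subspace S \<longleftrightarrow>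
     0 \<in> S \<and> (\<forall>x\<in>S. \<forall>y\<in>S. x + y \<in> S) \<and> (\<forall>a x. x \<in> S \<longrightarrow> a *\<^sub>C x \<in> S) \<and>
     (\<forall>X L. (\<forall>n. X n \<in> S) \<and> ((\<lambda>n. cnorm (X n - L)) \<longlonglongrightarrow> 0) \<longrightarrow> L \<in> S)"

definition Lat :: "'a::complex_hilbert set set" where
  "Lat = {S. closed_subspace S}"

definition ray :: "'a::complex_hilbert \<Rightarrow> 'a set" where
  "ray \<psi> = {c *\<^sub>C \<psi> | c. True}"

definition Rays :: "'a::complex_hilbert set set" where
  "Rays = {ray \<psi> | \<psi>. \<psi> \<noteq> 0}"

definition proj :: "'a::complex_hilbert set \<Rightarrow> 'a \<Rightarrow> 'a" where
  "proj S x = (THE p. p \<in> S \<and> (\<forall>s\<in>S. cinner s (x - p) = 0))"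

text \<open>\<open>ebar([\<psi>], S) = \<parallel>P_S \<psi>\<parallel>^2 / \<parallel>\<psi>\<parallel>^2\<close>, evaluated at a nonzero representative
of the ray (the value does not depend on the representative).\<close>
definition ebar :: "'a::complex_hilbert set \<Rightarrow> 'a set \<Rightarrow> real" where
  "ebar r S = (let \<psi> = (SOME \<psi>. \<psi> \<noteq> 0 \<and> r = ray \<psi>) in
                 (cnorm (proj S \<psi>))\<^sup>2 / (cnorm \<psi>)\<^sup>2)"

definition chu_morphism ::
  "'x set \<Rightarrow> 'a set \<Rightarrow> ('x \<Rightarrow> 'a \<Rightarrow> real) \<Rightarrow>
   'y set \<Rightarrow> 'b set \<Rightarrow> ('y \<Rightarrow> 'b \<Rightarrow> real) \<Rightarrow>
   ('x \<Rightarrow> 'y) \<Rightarrow> ('b \<Rightarrow> 'a) \<Rightarrow> bool" where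
  "chu_morphism X A e X' A' e' fl fu \<longleftrightarrow>
     (\<forall>x\<in>X. fl x \<in> X') \<and> (\<forall>a'\<in>A'. fu a' \<in> A) \<and>
     (\<forall>x\<in>X. \<forall>a'\<in>A'. e x (fu a') = e' (fl x) a')"

end

theory Submission
  imports Defs
begin

text \<open>If \<open>f\<^sub>*\<close> is injective, put \<open>T = f\<^sup>*(f\<^sub>*[\<psi>])\<close>.  The Chu condition gives
\<open>ebar([\<psi>], T) = ebar(f\<^sub>*[\<psi>], f\<^sub>*[\<psi>]) = 1\<close>, so \<open>T \<noteq> {0}\<close>; and for every ray \<open>s \<subseteq> T\<close> it gives
\<open>ebar(f\<^sub>*s, f\<^sub>*[\<psi>]) = ebar(s, T) = 1\<close>.  A ray that is fully inside another ray (in the sense of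
transition probability 1) equals it, hence \<open>f\<^sub>*s = f\<^sub>*[\<psi>]\<close> and \<open>s = [\<psi>]\<close> by injectivity.
A nonzero closed subspace all of whose rays are \<open>[\<psi>]\<close> is \<open>[\<psi>]\<close> itself.  Conversely,
\<open>f\<^sup>* \<circ> f\<^sub>* = id\<close> on rays makes \<open>f\<^sub>*\<close> injective.

Since \<open>proj\<close> is a definite description, it is only ever evaluated onto rays and onto
\<open>{0}\<close>, where the projection is explicit; no projection theorem is needed.\<close>

lemma scaleC_zero_left [simp]: "(0::complex) *\<^sub>C (x::'a::complex_hilbert) = 0"
  using scaleC_add_left[of 0 0 x] by simp

lemma scaleC_zero_right [simp]: "a *\<^sub>C (0::'a::complex_hilbert) = 0"
  using scaleC_add_right[of a 0 0] by simp

lemma scaleC_diff_left: "(a - b) *\<^sub>C x = a *\<^sub>C x - b *\<^sub>C (x::'a::complex_hilbert)"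
  using scaleC_add_left[of "a - b" b x] by (simp add: eq_diff_eq)

lemma cinner_zero_right [simp]: "cinner x (0::'a::complex_hilbert) = 0"
  using cinner_add_right[of x 0 0] by simp

lemma cinner_zero_left [simp]: "cinner (0::'a::complex_hilbert) x = 0"
  using cinner_commute[of 0 x] by simp

lemma cinner_diff_right: "cinner x (y - z) = cinner x y - cinner x (z::'a::complex_hilbert)"
  using cinner_add_right[of x "y - z" z] by (simp add: eq_diff_eq)

lemma cinner_add_left: "cinner (x + y) z = cinner x z + cinner y (z::'a::complex_hilbert)"
  by (metis cinner_commute cinner_add_right complex_cnj_add)

lemma cinner_diff_left: "cinner (x - y) z = cinner x z - cinner y (z::'a::complex_hilbert)"
  by (metis cinner_commute cinner_diff_right complex_cnj_diff)

lemma cinner_scaleC_left: "cinner (a *\<^sub>C x) y = cnj a * cinner x (y::'a::complex_hilbert)"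
  by (metis cinner_commute cinner_scaleC_right complex_cnj_mult)

lemma Re_cinner_self_eq_0_iff: "Re (cinner x x) = 0 \<longleftrightarrow> x = (0::'a::complex_hilbert)"
  using cinner_self_nonneg[of x] cinner_self_eq_0[of x] by (auto simp: complex_eq_iff)

lemma cnorm_power2: "(cnorm x)\<^sup>2 = Re (cinner x x)"
  unfolding cnorm_def using cinner_self_nonneg[of x] by simp

lemma cnorm_pos: "x \<noteq> 0 \<Longrightarrow> cnorm (x::'a::complex_hilbert) > 0"
  unfolding cnorm_def using cinner_self_nonneg[of x] Re_cinner_self_eq_0_iff[of x]
  by (simp add: order_less_le)

lemma cnorm_minus_commute: "cnorm (x - y) = cnorm (y - (x::'a::complex_hilbert))"
  unfolding cnorm_def by (simp add: cinner_diff_left cinner_diff_right algebra_simps)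

lemma cinner_add_self_orthogonal:
  "cinner u w = 0 \<Longrightarrow> cinner (u + w) (u + w) = cinner u u + cinner w (w::'a::complex_hilbert)"
  using cinner_commute[of u w] by (simp add: cinner_add_left cinner_add_right)

lemma cnorm_le_cnorm_add_orthogonal:
  assumes "cinner u w = 0"
  shows "cnorm w \<le> cnorm (u + (w::'a::complex_hilbert))"
  unfolding cnorm_def
  using cinner_add_self_orthogonal[OF assms] cinner_self_nonneg[of u] by simp

lemma cinner_orthogonal_component: "cinner x (y - (cinner x y / cinner x x) *\<^sub>C x) = 0"
  using cinner_self_eq_0[of x] by (cases "x = 0") (simp_all add: cinner_diff_right cinner_scaleC_right)

lemma scaleC_mem_ray [simp]: "c *\<^sub>C \<psi> \<in> ray \<psi>"
  unfolding ray_def by blast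

lemma mem_ray_self: "\<psi> \<in> ray \<psi>"
  using scaleC_mem_ray[of 1 \<psi>] by (simp add: scaleC_one)

lemma ray_eq_if_mem:
  assumes "x \<in> ray \<psi>" "x \<noteq> 0"
  shows "ray x = ray (\<psi>::'a::complex_hilbert)"
proof -
  obtain c where x: "x = c *\<^sub>C \<psi>" using assms(1) unfolding ray_def by blast
  with assms(2) have "c \<noteq> 0" by auto
  with x have \<psi>: "\<psi> = inverse c *\<^sub>C x" by (simp add: scaleC_scaleC scaleC_one)
  show ?thesis
  proof
    show "ray x \<subseteq> ray \<psi>" unfolding ray_def x by (auto simp: scaleC_scaleC)
    show "ray \<psi> \<subseteq> ray x" unfolding ray_def \<psi> by (auto simp: scaleC_scaleC)
  qed
qed

lemma ray_subset_closed_subspace: "closed_subspace T \<Longrightarrow> x \<in> T \<Longrightarrow> ray x \<subseteq> T"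
  unfolding closed_subspace_def ray_def by auto

lemma closed_subspace_ray: "closed_subspace (ray (\<psi>::'a::complex_hilbert))"
  unfolding closed_subspace_def
proof (intro conjI allI impI ballI)
  show "0 \<in> ray \<psi>" using scaleC_mem_ray[of 0 \<psi>] by simp
next
  fix x y assume "x \<in> ray \<psi>" "y \<in> ray \<psi>"
  then show "x + y \<in> ray \<psi>" unfolding ray_def by (auto simp flip: scaleC_add_left)
next
  fix a x assume "x \<in> ray \<psi>"
  then show "a *\<^sub>C x \<in> ray \<psi>" unfolding ray_def by (auto simp: scaleC_scaleC)
next
  fix X L assume lim: "(\<forall>n. X n \<in> ray \<psi>) \<and> (\<lambda>n. cnorm (X n - L)) \<longlonglongrightarrow> 0"
  have "\<forall>n. \<exists>c. X n = c *\<^sub>C \<psi>" using lim unfolding ray_def by blast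
  then obtain c where X: "\<And>n. X n = c n *\<^sub>C \<psi>" by metis
  define a where "a = cinner \<psi> L / cinner \<psi> \<psi>"
  define w where "w = L - a *\<^sub>C \<psi>"
  have orth: "cinner ((a - c n) *\<^sub>C \<psi>) w = 0" for n
    using cinner_orthogonal_component[of \<psi> L] by (simp add: w_def a_def cinner_scaleC_left)
  have "cnorm w \<le> cnorm (X n - L)" for n
    using cnorm_le_cnorm_add_orthogonal[OF orth[of n]]
    by (simp add: X w_def scaleC_diff_left cnorm_minus_commute[of _ L])
  with lim have "cnorm w \<le> 0"
    by (intro LIMSEQ_le_const[of "\<lambda>n. cnorm (X n - L)"]) auto
  then have "w = 0" using cnorm_pos[of w] by force
  then show "L \<in> ray \<psi>" unfolding w_def by simp
qed

lemma Rays_subset_Lat: "Rays \<subseteq> Lat"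
  unfolding Rays_def Lat_def using closed_subspace_ray by blast

lemma closed_subspace_eq_ray:
  assumes T: "closed_subspace T" and nonzero: "T \<noteq> {0}"
    and only_r: "\<And>s. s \<in> Rays \<Longrightarrow> s \<subseteq> T \<Longrightarrow> s = r"
  shows "T = r"
proof -
  have ray_in_T: "ray x = r" if "x \<in> T" "x \<noteq> 0" for x
    using that only_r ray_subset_closed_subspace[OF T] unfolding Rays_def by blast
  have "0 \<in> T" using T unfolding closed_subspace_def by simp
  with nonzero obtain x where x: "x \<in> T" "x \<noteq> 0" by blast
  have "r \<subseteq> T" using ray_in_T[OF x] ray_subset_closed_subspace[OF T x(1)] by simp
  moreover have "T \<subseteq> r"
  proof
    fix y assume "y \<in> T"
    show "y \<in> r"
    proof (cases "y = 0")
      case True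
      then show ?thesis using ray_in_T[OF x] scaleC_mem_ray[of 0 x] by simp
    next
      case False
      then show ?thesis using ray_in_T[OF \<open>y \<in> T\<close>] mem_ray_self[of y] by simp
    qed
  qed
  ultimately show ?thesis by blast
qed

lemma minus_one_scaleC: "(-1) *\<^sub>C x = - (x::'a::complex_hilbert)"
  using scaleC_add_left[of "-1" 1 x] by (simp add: scaleC_one eq_neg_iff_add_eq_0)

lemma closed_subspace_diff: "closed_subspace S \<Longrightarrow> x \<in> S \<Longrightarrow> y \<in> S \<Longrightarrow> x - y \<in> S"
  unfolding closed_subspace_def by (metis minus_one_scaleC diff_conv_add_uminus)

lemma proj_eqI:
  assumes S: "closed_subspace S" and "p \<in> S" and orth: "\<forall>s\<in>S. cinner s (x - p) = 0"
  shows "proj S x = p"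
  unfolding proj_def
proof (rule the_equality)
  show "p \<in> S \<and> (\<forall>s\<in>S. cinner s (x - p) = 0)" using assms by simp
next
  fix q assume q: "q \<in> S \<and> (\<forall>s\<in>S. cinner s (x - q) = 0)"
  have "q - p \<in> S"
    using closed_subspace_diff[OF S] q \<open>p \<in> S\<close> by blast
  with orth q have "cinner (q - p) ((x - p) - (x - q)) = 0" by (simp add: cinner_diff_right)
  then show "q = p" using cinner_self_eq_0[of "q - p"] by simp
qed

lemma proj_ray:
  assumes "\<chi> \<noteq> 0"
  shows "proj (ray \<chi>) \<phi> = (cinner \<chi> \<phi> / cinner \<chi> \<chi>) *\<^sub>C \<chi>"
  using cinner_orthogonal_component[of \<chi> \<phi>]
  by (intro proj_eqI closed_subspace_ray) (auto simp: ray_def cinner_scaleC_left)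

lemma ebar_representative:
  assumes "r \<in> Rays"
  obtains \<phi> where "\<phi> \<noteq> 0" "r = ray \<phi>" "\<And>S. ebar r S = (cnorm (proj S \<phi>))\<^sup>2 / (cnorm \<phi>)\<^sup>2"
proof -
  have "\<exists>\<psi>. \<psi> \<noteq> 0 \<and> r = ray \<psi>" using assms unfolding Rays_def by blast
  from someI_ex[OF this] show ?thesis using that unfolding ebar_def Let_def by blast
qed

lemma ebar_eq_1_if_subset:
  assumes r: "r \<in> Rays" and S: "closed_subspace S" and "r \<subseteq> S"
  shows "ebar r S = 1"
proof -
  obtain \<phi> where \<phi>: "\<phi> \<noteq> 0" "r = ray \<phi>" "\<And>S. ebar r S = (cnorm (proj S \<phi>))\<^sup>2 / (cnorm \<phi>)\<^sup>2"
    using ebar_representative[OF r] by blast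
  have "proj S \<phi> = \<phi>"
    using \<open>r \<subseteq> S\<close> \<phi>(2) mem_ray_self by (intro proj_eqI[OF S]) auto
  with \<phi> cnorm_pos[of \<phi>] show ?thesis by simp
qed

lemma ebar_zero_subspace: "r \<in> Rays \<Longrightarrow> ebar r {0::'a::complex_hilbert} = 0"
proof -
  assume r: "r \<in> Rays"
  have "ray (0::'a) = {0}" unfolding ray_def by auto
  then have zero: "proj {0::'a} x = 0" for x
    using closed_subspace_ray[of "0::'a"] by (intro proj_eqI) auto
  obtain \<phi> where \<phi>: "\<And>S. ebar r S = (cnorm (proj S \<phi>))\<^sup>2 / (cnorm \<phi>)\<^sup>2"
    using ebar_representative[OF r] by blast
  have "ebar r {0} = (cnorm (proj {0} \<phi>))\<^sup>2 / (cnorm \<phi>)\<^sup>2" by (rule \<phi>)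
  also have "\<dots> = 0" by (simp only: zero cnorm_def cinner_zero_left) simp
  finally show ?thesis .
qed

lemma ray_eq_if_ebar_eq_1:
  assumes s: "s \<in> Rays" and r: "r \<in> Rays" and e: "ebar s r = 1"
  shows "s = (r::'a::complex_hilbert set)"
proof -
  obtain \<phi> where \<phi>: "\<phi> \<noteq> 0" "s = ray \<phi>" "\<And>S. ebar s S = (cnorm (proj S \<phi>))\<^sup>2 / (cnorm \<phi>)\<^sup>2"
    using ebar_representative[OF s] by blast
  obtain \<chi> where \<chi>: "\<chi> \<noteq> 0" "r = ray \<chi>" using r unfolding Rays_def by blast
  define q where "q = (cinner \<chi> \<phi> / cinner \<chi> \<chi>) *\<^sub>C \<chi>"
  have "cinner q (\<phi> - q) = 0"
    using cinner_orthogonal_component[of \<chi> \<phi>] by (simp add: q_def cinner_scaleC_left)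
  then have pythagoras: "cinner \<phi> \<phi> = cinner q q + cinner (\<phi> - q) (\<phi> - q)"
    using cinner_add_self_orthogonal[of q "\<phi> - q"] by simp
  have "Re (cinner q q) = Re (cinner \<phi> \<phi>)"
    using e cnorm_pos[OF \<phi>(1)] by (simp add: \<phi>(3) \<chi>(2) proj_ray[OF \<chi>(1)] q_def cnorm_power2)
  with pythagoras have "\<phi> = q" using Re_cinner_self_eq_0_iff[of "\<phi> - q"] by simp
  then have "\<phi> \<in> ray \<chi>" unfolding q_def by (metis scaleC_mem_ray)
  with \<phi> \<chi> show ?thesis using ray_eq_if_mem by metis
qed

lemma chu_morphism_rays_retract_if_inj:
  assumes chu: "chu_morphism (Rays :: 'h::complex_hilbert set set) Lat ebar
                             (Rays :: 'k::complex_hilbert set set) Lat ebar fl fu"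
    and inj: "inj_on fl Rays" and r: "r \<in> Rays"
  shows "fu (fl r) = r"
proof -
  have fl_ray: "fl x \<in> Rays" if "x \<in> Rays" for x
    using chu that unfolding chu_morphism_def by blast
  have flr_Lat: "fl r \<in> Lat" using fl_ray[OF r] Rays_subset_Lat by blast
  have adjoint: "ebar x (fu (fl r)) = ebar (fl x) (fl r)" if "x \<in> Rays" for x
    using chu that flr_Lat unfolding chu_morphism_def by blast
  have T: "closed_subspace (fu (fl r))"
    using chu flr_Lat unfolding chu_morphism_def Lat_def by blast
  have "ebar r (fu (fl r)) = 1"
    using adjoint[OF r] ebar_eq_1_if_subset[OF fl_ray[OF r]] flr_Lat unfolding Lat_def by simp
  then have "fu (fl r) \<noteq> {0}" using ebar_zero_subspace[OF r] by auto
  moreover have "s = r" if s: "s \<in> Rays" "s \<subseteq> fu (fl r)" for s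
  proof -
    have "ebar (fl s) (fl r) = 1" using adjoint[OF s(1)] ebar_eq_1_if_subset[OF s(1) T s(2)] by simp
    then have "fl s = fl r" using ray_eq_if_ebar_eq_1 fl_ray s(1) r by blast
    then show ?thesis using inj s(1) r by (meson inj_onD)
  qed
  ultimately show ?thesis using closed_subspace_eq_ray[OF T] by blast
qed

theorem proposition3p5:
  fixes fl :: "'h::complex_hilbert set \<Rightarrow> 'k::complex_hilbert set"
    and fu :: "'k set \<Rightarrow> 'h set"
  assumes "chu_morphism (Rays :: 'h set set) (Lat :: 'h set set) ebar
                        (Rays :: 'k set set) (Lat :: 'k set set) ebar fl fu"
  shows "inj_on fl (Rays :: 'h set set) \<longleftrightarrow>
         (\<forall>\<psi>::'h. \<psi> \<noteq> 0 \<longrightarrow> fu (fl (ray \<psi>)) = ray \<psi>)"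
proof
  assume "inj_on fl (Rays :: 'h set set)"
  then show "\<forall>\<psi>::'h. \<psi> \<noteq> 0 \<longrightarrow> fu (fl (ray \<psi>)) = ray \<psi>"
    using chu_morphism_rays_retract_if_inj[OF assms] unfolding Rays_def by blast
next
  assume "\<forall>\<psi>::'h. \<psi> \<noteq> 0 \<longrightarrow> fu (fl (ray \<psi>)) = ray \<psi>"
  then have "fu (fl r) = r" if "r \<in> Rays" for r
    using that unfolding Rays_def by blast
  then show "inj_on fl (Rays :: 'h set set)" by (metis inj_onI)
qed

end
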